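(* Let $(\mathcal G_A,p^A)$ and $(\mathcal G_B,p^B)$ be CPS's on the finite set $\Omega$ (satisfying the standing assumptions), each of which satisfies certainty reflection and is $1$-closed. Fix an event $E\subseteq\Omega$, a state $\omega\in\Omega$, and numbers $q_A,q_B\in[0,1]$. If $\omega\in C^\infty$ (i.e., it is common certainty at $\omega$ that Alice assigns probability $q_A$ to $E$ and Bob assigns probability $q_B$ to $E$) and local consistency holds at $\omega$, then $q_A=q_B$.
   Context: $\Omega$ is a finite set; every subset of $\Omega$ is an event. A conditional probability space (CPS) is a pair $(\mathcal G,p)$ where $\mathcal G$ is a family of nonempty subsets of $\Omega$ and $p$ assigns to each $G\in\mathcal G$ a probability measure $p_G$ on $\Omega$ such that (i) $p_G(G)=1$ for all $G\in\mathcal G$, and (ii) $p_G(E)=p_G(F)\,p_F(E)$ whenever $E\subseteq F\subseteq G$, $E\subseteq\Omega$, $F,G\in\mathcal G$. Standing assumption: every conditioning family $\mathcal G$ is closed under unions and under nonempty intersections (if $G,H\in\mathcal G$ then $G\cup H\in\mathcal G$, and $G\cap H\in\mathcal G$ whenever $G\cap H\neq\emptyset$) and covers $\Omega$ (every $\omega$ lies in some member). For a CPS $(\mathcal G_i,p^i)$ and $\omega\in\Omega$, the atom $m_i(\omega)=\bigcap\{G\in\mathcal G_i:\omega\in G\}$; it is nonempty and belongs to $\mathcal G_i$. The CPS $(\mathcal G_i,p^i)$ is $1$-closed if every $L\subseteq\Omega$ such that $L\subseteq G$ and $p^i_G(L)=1$ for some $G\in\mathcal G_i$ belongs to $\mathcal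 G_i$. It satisfies certainty reflection if for every event $E$, every $q\in[0,1]$ and every $\omega$: $p^i_{m_i(\omega)}(E)=q$ implies $p^i_{m_i(\omega)}(\{\omega'\in\Omega: p^i_{m_i(\omega')}(E)=q\})=1$. For agents $i=A,B$ and an event $F$, $C_i(F)=\{\omega: p^i_{m_i(\omega)}(F)=1\}$. Given $E$ and $q_A,q_B$, define $A^0=\{\omega:p^A_{m_A(\omega)}(E)=q_A\}$, $B^0=\{\omega:p^B_{m_B(\omega)}(E)=q_B\}$, $A^{n+1}=A^n\cap C_A(B^n)$, $B^{n+1}=B^n\cap C_B(A^n)$ for $n\ge0$, and $C^\infty=\bigcap_{n\ge0}A^n\cap\bigcap_{n\ge0}B^n$. Let $m(\omega)$ denote the intersection of all members of $\mathcal G_A\cap\mathcal G_B$ containing $\omega$ (note $\Omega\in\mathcal G_A\cap\mathcal G_B$). Local consistency holds at $\omega$ if $p^A_{m(\omega)}=p^B_{m(\omega)}$. *)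

theory Defs
  imports Complex_Main
begin

text \<open>The state space Omega is the (finite) universe of the type 'w. Events are sets of
  type 'w set. A probability measure on Omega is represented by its values on all events.\<close>

definition prob_measure :: "('w set \<Rightarrow> real) \<Rightarrow> bool" where
  "prob_measure P \<longleftrightarrow> (\<forall>E. P E \<ge> 0) \<and> P UNIV = 1 \<and>
     (\<forall>E F. E \<inter> F = {} \<longrightarrow> P (E \<union> F) = P E + P F)"

definition cps :: "'w set set \<Rightarrow> ('w set \<Rightarrow> 'w set \<Rightarrow> real) \<Rightarrow> bool" where
  "cps G p \<longleftrightarrow> (\<forall>H\<in>G. H \<noteq> {}) \<and> (\<forall>H\<in>G. prob_measure (p H)) \<and>
     (\<forall>H\<in>G. p H H = 1) \<and>
     (\<forall>E F H. E \<subseteq> F \<longrightarrow> F \<subseteq> H \<longrightarrow> F \<in> G \<longrightarrow> H \<in> G \<longrightarrow> p H E = p H F * p F E)"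

definition standing :: "'w set set \<Rightarrow> bool" where
  "standing G \<longleftrightarrow> (\<forall>H\<in>G. \<forall>K\<in>G. H \<union> K \<in> G) \<and>
     (\<forall>H\<in>G. \<forall>K\<in>G. H \<inter> K \<noteq> {} \<longrightarrow> H \<inter> K \<in> G) \<and> (\<forall>w. \<exists>H\<in>G. w \<in> H)"

definition atom :: "'w set set \<Rightarrow> 'w \<Rightarrow> 'w set" where
  "atom G w = \<Inter>{H \<in> G. w \<in> H}"

definition one_closed :: "'w set set \<Rightarrow> ('w set \<Rightarrow> 'w set \<Rightarrow> real) \<Rightarrow> bool" where
  "one_closed G p \<longleftrightarrow> (\<forall>L H. H \<in> G \<longrightarrow> L \<subseteq> H \<longrightarrow> p H L = 1 \<longrightarrow> L \<in> G)"

definition certainty_reflection :: "'w set set \<Rightarrow> ('w set \<Rightarrow> 'w set \<Rightarrow> real) \<Rightarrow> bool" where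
  "certainty_reflection G p \<longleftrightarrow>
     (\<forall>E (q::real) w. p (atom G w) E = q \<longrightarrow>
        p (atom G w) {w'. p (atom G w') E = q} = 1)"

definition certain :: "'w set set \<Rightarrow> ('w set \<Rightarrow> 'w set \<Rightarrow> real) \<Rightarrow> 'w set \<Rightarrow> 'w set" where
  "certain G p F = {w. p (atom G w) F = 1}"

primrec AB_seq :: "'w set set \<Rightarrow> ('w set \<Rightarrow> 'w set \<Rightarrow> real) \<Rightarrow>
    'w set set \<Rightarrow> ('w set \<Rightarrow> 'w set \<Rightarrow> real) \<Rightarrow> 'w set \<Rightarrow> real \<Rightarrow> real \<Rightarrow> nat \<Rightarrow> 'w set \<times> 'w set" where
  "AB_seq GA pA GB pB E qA qB 0 =
     ({w. pA (atom GA w) E = qA}, {w. pB (atom GB w) E = qB})"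
| "AB_seq GA pA GB pB E qA qB (Suc n) =
     (let (A, B) = AB_seq GA pA GB pB E qA qB n
      in (A \<inter> certain GA pA B, B \<inter> certain GB pB A))"

definition C_inf :: "'w set set \<Rightarrow> ('w set \<Rightarrow> 'w set \<Rightarrow> real) \<Rightarrow>
    'w set set \<Rightarrow> ('w set \<Rightarrow> 'w set \<Rightarrow> real) \<Rightarrow> 'w set \<Rightarrow> real \<Rightarrow> real \<Rightarrow> 'w set" where
  "C_inf GA pA GB pB E qA qB =
     (\<Inter>n. fst (AB_seq GA pA GB pB E qA qB n)) \<inter> (\<Inter>n. snd (AB_seq GA pA GB pB E qA qB n))"

end

theory Submission
  imports Defs
begin

(* Certainty reflection makes every A^n evident to Alice (she is certain of A^n throughout A^n),
   and A^(n+1) is contained in C_A(B^n); hence C^inf is evident to Alice, and symmetrically to Bob.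
   By 1-closedness an evident event contains the atom of each of its states, so C^inf is a union
   of atoms and lies in both conditioning families.  The meet atom m(w) is therefore inside C^inf,
   where all of Alice's atoms give E probability qA; the chain rule, applied to unions of atoms,
   yields p^A_m(w)(E) = qA.  Likewise p^B_m(w)(E) = qB, and local consistency gives qA = qB. *)

lemma prob_measureD:
  assumes "prob_measure P"
  shows prob_measure_nonneg: "P A \<ge> 0"
    and prob_measure_UNIV: "P UNIV = 1"
    and prob_measure_disjoint_Un: "A \<inter> B = {} \<Longrightarrow> P (A \<union> B) = P A + P B"
  using assms unfolding prob_measure_def by auto

lemma prob_measure_empty:
  assumes "prob_measure P"
  shows "P {} = 0"
  using prob_measure_disjoint_Un[OF assms, of "{}" "{}"] by simp

lemma prob_measure_split:
  assumes "prob_measure P"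
  shows "P A = P (A \<inter> B) + P (A - B)"
proof -
  have "A = (A \<inter> B) \<union> (A - B)" by blast
  then show ?thesis
    using prob_measure_disjoint_Un[OF assms, of "A \<inter> B" "A - B"] by auto
qed

lemma prob_measure_mono:
  assumes "prob_measure P" "A \<subseteq> B"
  shows "P A \<le> P B"
  using prob_measure_split[OF assms(1), of B A] prob_measure_nonneg[OF assms(1), of "B - A"]
    Int_absorb1[OF assms(2)] by (simp add: Int_commute)

lemma prob_measure_Un:
  assumes "prob_measure P"
  shows "P (A \<union> B) = P A + P B - P (A \<inter> B)"
  using prob_measure_split[OF assms, of "A \<union> B" A] prob_measure_split[OF assms, of B A]
  by (simp add: Int_absorb2 Int_commute Un_Diff)

lemma prob_measure_Int_eq_1:
  assumes "prob_measure P" "P H = 1"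
  shows "P (E \<inter> H) = P E"
proof -
  have "P (- H) = 0"
    using prob_measure_split[OF assms(1), of UNIV H] prob_measure_UNIV[OF assms(1)] assms(2)
    by (simp add: Compl_eq_Diff_UNIV)
  moreover have "P (E - H) \<le> P (- H)" by (rule prob_measure_mono[OF assms(1)]) blast
  ultimately show ?thesis
    using prob_measure_split[OF assms(1), of E H] prob_measure_nonneg[OF assms(1), of "E - H"]
    by simp
qed

lemma prob_measure_Inter_eq_1:
  assumes "prob_measure P" "finite F" "\<forall>X\<in>F. P X = 1"
  shows "P (\<Inter>F) = 1"
  using assms(2,3)
proof (induction F rule: finite_induct)
  case empty
  then show ?case using prob_measure_UNIV[OF assms(1)] by simp
next
  case (insert X F)
  then show ?case
    using prob_measure_Int_eq_1[OF assms(1), of "\<Inter>F" X] by (simp add: Int_commute)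
qed

lemma standingD:
  assumes "standing G"
  shows standing_Un: "H \<in> G \<Longrightarrow> K \<in> G \<Longrightarrow> H \<union> K \<in> G"
    and standing_Int: "H \<in> G \<Longrightarrow> K \<in> G \<Longrightarrow> H \<inter> K \<noteq> {} \<Longrightarrow> H \<inter> K \<in> G"
    and standing_cover: "\<exists>H\<in>G. x \<in> H"
  using assms unfolding standing_def by auto

lemma standing_Union:
  assumes "standing G" "finite F" "F \<noteq> {}" "F \<subseteq> G"
  shows "\<Union>F \<in> G"
  using assms(2-4) by (induction F rule: finite_ne_induct) (auto intro: standing_Un[OF assms(1)])

lemma standing_Inter:
  assumes "standing G" "finite F" "F \<noteq> {}" "F \<subseteq> G" "\<Inter>F \<noteq> {}"
  shows "\<Inter>F \<in> G"
  using assms(2-5) by (induction F rule: finite_ne_induct) (auto intro: standing_Int[OF assms(1)])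

lemma standing_UNIV:
  fixes G :: "('w::finite) set set"
  assumes "standing G"
  shows "UNIV \<in> G"
proof -
  have "\<Union>G = UNIV" using standing_cover[OF assms] by blast
  moreover have "G \<noteq> {}" using standing_cover[OF assms] by blast
  ultimately show ?thesis using standing_Union[OF assms finite _ subset_refl] by metis
qed

lemma standing_Int_families:
  fixes G1 G2 :: "('w::finite) set set"
  assumes "standing G1" "standing G2"
  shows "standing (G1 \<inter> G2)"
  unfolding standing_def
  using standingD[OF assms(1)] standingD[OF assms(2)] standing_UNIV[OF assms(1)]
    standing_UNIV[OF assms(2)]
  by (meson IntD1 IntD2 IntI UNIV_I)

lemma atom_self: "x \<in> atom G x"
  unfolding atom_def by blast

lemma atom_least: "H \<in> G \<Longrightarrow> x \<in> H \<Longrightarrow> atom G x \<subseteq> H"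
  unfolding atom_def by blast

lemma atom_mem:
  fixes G :: "('w::finite) set set"
  assumes "standing G"
  shows "atom G x \<in> G"
  unfolding atom_def using standing_cover[OF assms, of x]
  by (intro standing_Inter[OF assms]) auto

lemma cpsD:
  assumes "cps G p"
  shows cps_nonempty: "H \<in> G \<Longrightarrow> H \<noteq> {}"
    and cps_prob_measure: "H \<in> G \<Longrightarrow> prob_measure (p H)"
    and cps_self: "H \<in> G \<Longrightarrow> p H H = 1"
    and cps_chain: "E \<subseteq> F \<Longrightarrow> F \<subseteq> H \<Longrightarrow> F \<in> G \<Longrightarrow> H \<in> G \<Longrightarrow> p H E = p H F * p F E"
proof -
  note c = assms[unfolded cps_def]
  show "H \<in> G \<Longrightarrow> H \<noteq> {}" using c[THEN conjunct1] by blast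
  show "H \<in> G \<Longrightarrow> prob_measure (p H)" using c[THEN conjunct2, THEN conjunct1] by blast
  show "H \<in> G \<Longrightarrow> p H H = 1" using c[THEN conjunct2, THEN conjunct2, THEN conjunct1] by blast
  show "E \<subseteq> F \<Longrightarrow> F \<subseteq> H \<Longrightarrow> F \<in> G \<Longrightarrow> H \<in> G \<Longrightarrow> p H E = p H F * p F E"
    using c[THEN conjunct2, THEN conjunct2, THEN conjunct2] by blast
qed

lemma cps_chain_Int:
  assumes "cps G p" "F \<in> G" "H \<in> G" "F \<subseteq> H"
  shows "p H (E \<inter> F) = p H F * p F E"
  using cps_chain[OF assms(1) _ assms(4,2,3), of "E \<inter> F"]
    prob_measure_Int_eq_1[OF cps_prob_measure[OF assms(1,2)] cps_self[OF assms(1,2)]]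
  by simp

lemma cps_Un_eq:
  assumes "cps G p" "standing G" "K \<in> G" "L \<in> G"
    and "p K E = q" "p L E = q" "K \<inter> L \<noteq> {} \<Longrightarrow> p (K \<inter> L) E = q"
  shows "p (K \<union> L) E = q"
proof -
  have KL: "K \<union> L \<in> G" using standing_Un[OF assms(2-4)] .
  let ?P = "p (K \<union> L)"
  have P: "prob_measure ?P" "?P (K \<union> L) = 1"
    using cps_prob_measure[OF assms(1) KL] cps_self[OF assms(1) KL] .
  have "?P (E \<inter> (K \<inter> L)) = ?P (K \<inter> L) * q"
  proof (cases "K \<inter> L = {}")
    case True
    then show ?thesis using prob_measure_empty[OF P(1)] by simp
  next
    case False
    then show ?thesis
      using cps_chain_Int[OF assms(1) standing_Int[OF assms(2-4)] KL] assms(7) by auto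
  qed
  moreover have "?P (E \<inter> K) = ?P K * q" "?P (E \<inter> L) = ?P L * q"
    using cps_chain_Int[OF assms(1) _ KL] assms(3-6) by auto
  moreover have "E \<inter> (K \<union> L) = (E \<inter> K) \<union> (E \<inter> L)"
    and "(E \<inter> K) \<inter> (E \<inter> L) = E \<inter> (K \<inter> L)"
    by blast+
  ultimately have "?P (E \<inter> (K \<union> L)) = q * (?P K + ?P L - ?P (K \<inter> L))"
    using prob_measure_Un[OF P(1), of "E \<inter> K" "E \<inter> L"] by (simp add: algebra_simps)
  then show ?thesis
    using prob_measure_Un[OF P(1), of K L] prob_measure_Int_eq_1[OF P] P(2) by simp
qed

lemma cps_Union_eq:
  fixes G :: "('w::finite) set set"
  assumes "cps G p" "standing G" "finite F" "F \<noteq> {}" "F \<subseteq> G" "\<forall>K\<in>F. K \<subset> H"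
    and "\<And>K. K \<in> G \<Longrightarrow> K \<subset> H \<Longrightarrow> p K E = q"
  shows "p (\<Union>F) E = q"
  using assms(3-6)
proof (induction F rule: finite_ne_induct)
  case (singleton K)
  then show ?case using assms(7) by simp
next
  case (insert K F)
  have "\<Union>F \<in> G" using standing_Union[OF assms(2)] insert by blast
  moreover have "K \<inter> \<Union>F \<noteq> {} \<Longrightarrow> p (K \<inter> \<Union>F) E = q"
    using standing_Int[OF assms(2), of K "\<Union>F"] \<open>\<Union>F \<in> G\<close> insert assms(7) by blast
  ultimately show ?case using cps_Un_eq[OF assms(1,2)] insert assms(7) by simp
qed

text \<open>Atoms need not partition \<open>H\<close>, so \<open>H\<close> is built up as a union of atoms whose pairwise
  overlaps are handled by induction on proper subsets.\<close>

lemma cps_eq_if_atoms_eq: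
  fixes G :: "('w::finite) set set"
  assumes "cps G p" "standing G"
  shows "H \<in> G \<Longrightarrow> \<forall>x\<in>H. p (atom G x) E = q \<Longrightarrow> p H E = q"
proof (induction H rule: finite_psubset_induct[OF finite])
  case (1 H)
  have sub: "atom G x \<subseteq> H" if "x \<in> H" for x
    using atom_least[OF "1.prems"(1) that] .
  show ?case
  proof (cases "\<exists>x\<in>H. atom G x = H")
    case True
    then show ?thesis using "1.prems"(2) by auto
  next
    case False
    then have proper: "\<forall>K\<in>atom G ` H. K \<subset> H"
      using sub by auto
    have "\<Union>(atom G ` H) = H"
      using sub atom_self[of _ G] by blast
    moreover have "p (\<Union>(atom G ` H)) E = q"
    proof (rule cps_Union_eq[OF assms finite _ _ proper])
      show "atom G ` H \<noteq> {}" using cps_nonempty[OF assms(1) "1.prems"(1)] by blast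
      show "atom G ` H \<subseteq> G" using atom_mem[OF assms(2)] by blast
      show "p K E = q" if "K \<in> G" "K \<subset> H" for K
        using "1.IH"[OF that(2,1)] that(2) "1.prems"(2) by blast
    qed
    ultimately show ?thesis by simp
  qed
qed

lemma subset_certain_imp_mem:
  fixes G :: "('w::finite) set set"
  assumes "cps G p" "standing G" "one_closed G p" "C \<noteq> {}" "C \<subseteq> certain G p C"
  shows "C \<in> G"
proof -
  have "atom G x \<subseteq> C" if "x \<in> C" for x
  proof -
    have ax: "atom G x \<in> G" using atom_mem[OF assms(2)] .
    have "p (atom G x) C = 1" using that assms(5) unfolding certain_def by blast
    then have "p (atom G x) (C \<inter> atom G x) = 1"
      using prob_measure_Int_eq_1[OF cps_prob_measure[OF assms(1) ax] cps_self[OF assms(1) ax]]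
      by simp
    then have "C \<inter> atom G x \<in> G"
      using assms(3) ax unfolding one_closed_def by blast
    then have "atom G x \<subseteq> C \<inter> atom G x"
      using atom_least[of "C \<inter> atom G x" G x] that atom_self[of x G] by blast
    then show ?thesis by blast
  qed
  then have "C = \<Union>(atom G ` C)" using atom_self[of _ G] by blast
  also have "\<dots> \<in> G"
    using assms(4) atom_mem[OF assms(2)] by (intro standing_Union[OF assms(2) finite]) auto
  finally show ?thesis .
qed

lemma certainty_reflectionD:
  assumes "certainty_reflection G p"
  shows "{w. p (atom G w) E = q} \<subseteq> certain G p {w. p (atom G w) E = q}"
  using assms unfolding certainty_reflection_def certain_def by blast

lemma certain_subset_certain_certain:
  assumes "certainty_reflection G p"
  shows "certain G p X \<subseteq> certain G p (certain G p X)"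
  using certainty_reflectionD[OF assms, of X 1] unfolding certain_def .

lemma certain_Inter:
  fixes G :: "('w::finite) set set"
  assumes "cps G p" "standing G"
  shows "(\<Inter>X\<in>F. certain G p X) \<subseteq> certain G p (\<Inter>F)"
  using prob_measure_Inter_eq_1[OF cps_prob_measure[OF assms(1) atom_mem[OF assms(2)]] finite]
  unfolding certain_def by auto

lemma certain_Int:
  fixes G :: "('w::finite) set set"
  assumes "cps G p" "standing G"
  shows "certain G p X \<inter> certain G p Y \<subseteq> certain G p (X \<inter> Y)"
  using certain_Inter[OF assms, of "{X, Y}"] by simp

lemma AB_seq_Suc:
  "fst (AB_seq GA pA GB pB E qA qB (Suc n)) =
     fst (AB_seq GA pA GB pB E qA qB n) \<inter> certain GA pA (snd (AB_seq GA pA GB pB E qA qB n))"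
  "snd (AB_seq GA pA GB pB E qA qB (Suc n)) =
     snd (AB_seq GA pA GB pB E qA qB n) \<inter> certain GB pB (fst (AB_seq GA pA GB pB E qA qB n))"
  by (simp_all add: case_prod_beta Let_def)

lemma AB_seq_swap:
  "AB_seq GB pB GA pA E qB qA n = prod.swap (AB_seq GA pA GB pB E qA qB n)"
  by (induction n) (simp_all add: case_prod_beta)

lemma C_inf_swap: "C_inf GB pB GA pA E qB qA = C_inf GA pA GB pB E qA qB"
  unfolding C_inf_def AB_seq_swap[of GA pA GB pB] by (simp add: Int_commute)

lemma AB_seq_fst_subset_certain:
  fixes GA :: "('w::finite) set set"
  assumes "cps GA pA" "standing GA" "certainty_reflection GA pA"
  shows "fst (AB_seq GA pA GB pB E qA qB n)
           \<subseteq> certain GA pA (fst (AB_seq GA pA GB pB E qA qB n))"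
proof (induction n)
  case 0
  show ?case using certainty_reflectionD[OF assms(3)] by simp
next
  case (Suc n)
  let ?A = "fst (AB_seq GA pA GB pB E qA qB n)" and ?B = "snd (AB_seq GA pA GB pB E qA qB n)"
  have "?A \<inter> certain GA pA ?B \<subseteq> certain GA pA ?A \<inter> certain GA pA (certain GA pA ?B)"
    using Suc.IH certain_subset_certain_certain[OF assms(3)] by blast
  also have "\<dots> \<subseteq> certain GA pA (?A \<inter> certain GA pA ?B)"
    by (rule certain_Int[OF assms(1,2)])
  finally show ?case unfolding AB_seq_Suc .
qed

lemma C_inf_subset_certain:
  fixes GA :: "('w::finite) set set"
  assumes "cps GA pA" "standing GA" "certainty_reflection GA pA"
  shows "C_inf GA pA GB pB E qA qB \<subseteq> certain GA pA (C_inf GA pA GB pB E qA qB)"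
    (is "?C \<subseteq> certain GA pA ?C")
proof -
  let ?As = "\<lambda>n. fst (AB_seq GA pA GB pB E qA qB n)"
    and ?Bs = "\<lambda>n. snd (AB_seq GA pA GB pB E qA qB n)"
  have "?C \<subseteq> certain GA pA (?As n)" for n
    using AB_seq_fst_subset_certain[OF assms, of GB pB E qA qB n] unfolding C_inf_def by blast
  moreover have "?C \<subseteq> certain GA pA (?Bs n)" for n
    using AB_seq_Suc(1)[of GA pA GB pB E qA qB n] unfolding C_inf_def by blast
  ultimately have "?C \<subseteq> (\<Inter>X\<in>range ?As \<union> range ?Bs. certain GA pA X)" by blast
  also have "\<dots> \<subseteq> certain GA pA (\<Inter>(range ?As \<union> range ?Bs))"
    by (rule certain_Inter[OF assms(1,2)])
  also have "\<Inter>(range ?As \<union> range ?Bs) = ?C"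
    unfolding C_inf_def by (simp only: Inter_Un_distrib)
  finally show ?thesis .
qed

lemma C_inf_mem:
  fixes GA :: "('w::finite) set set"
  assumes "cps GA pA" "standing GA" "certainty_reflection GA pA" "one_closed GA pA"
    and "w \<in> C_inf GA pA GB pB E qA qB"
  shows "C_inf GA pA GB pB E qA qB \<in> GA"
proof (rule subset_certain_imp_mem[OF assms(1,2,4)])
  show "C_inf GA pA GB pB E qA qB \<noteq> {}" using assms(5) by blast
qed (rule C_inf_subset_certain[OF assms(1-3)])

lemma prob_eq_if_subset_C_inf:
  fixes GA :: "('w::finite) set set"
  assumes "cps GA pA" "standing GA" "H \<in> GA" "H \<subseteq> C_inf GA pA GB pB E qA qB"
  shows "pA H E = qA"
proof (rule cps_eq_if_atoms_eq[OF assms(1-3)], intro ballI)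
  fix x assume "x \<in> H"
  then have "x \<in> fst (AB_seq GA pA GB pB E qA qB 0)"
    using assms(4) unfolding C_inf_def by blast
  then show "pA (atom GA x) E = qA" by simp
qed

theorem theorem1:
  fixes GA GB :: "('w::finite) set set"
    and pA pB :: "'w set \<Rightarrow> 'w set \<Rightarrow> real"
    and E :: "'w set" and w :: 'w and qA qB :: real
  assumes "cps GA pA" and "standing GA" and "certainty_reflection GA pA" and "one_closed GA pA"
    and "cps GB pB" and "standing GB" and "certainty_reflection GB pB" and "one_closed GB pB"
    and "0 \<le> qA" and "qA \<le> 1" and "0 \<le> qB" and "qB \<le> 1"
    and "w \<in> C_inf GA pA GB pB E qA qB"
    and "pA (atom (GA \<inter> GB) w) = pB (atom (GA \<inter> GB) w)"
  shows "qA = qB"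
proof -
  let ?C = "C_inf GA pA GB pB E qA qB" and ?M = "atom (GA \<inter> GB) w"
  have swap: "C_inf GB pB GA pA E qB qA = ?C" by (rule C_inf_swap)
  have "?C \<in> GA" using C_inf_mem[OF assms(1-4,13)] .
  moreover have "?C \<in> GB" using C_inf_mem[OF assms(5-8) assms(13)[folded swap]] unfolding swap .
  moreover have "?M \<in> GA \<inter> GB" using atom_mem[OF standing_Int_families[OF assms(2,6)]] .
  ultimately have M: "?M \<in> GA" "?M \<in> GB" "?M \<subseteq> ?C"
    using atom_least[of ?C "GA \<inter> GB" w] assms(13) by auto
  have "pA ?M E = qA" using prob_eq_if_subset_C_inf[OF assms(1,2) M(1,3)] .
  moreover have "pB ?M E = qB"
    using prob_eq_if_subset_C_inf[OF assms(5,6) M(2) M(3)[folded swap]] .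
  ultimately show ?thesis using assms(14) by simp
qed

end
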